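(* Let $T$ be a search tree on a finite tree $\mathcal{T}$ and let $\mathcal{H}$ be a nonempty connected subgraph of $\mathcal{T}$. Then there is a unique search tree $T|_{\mathcal{H}}$ on $\mathcal{H}$ such that for every $v\in V(\mathcal{H})$, $$\mathtt{Path}_{T|_{\mathcal{H}}}(v)=\mathtt{Path}_T(v)\cap V(\mathcal{H}).$$
   Context: A search tree on a tree $\mathcal{T}$ is a rooted tree $T$ with vertex set $V(\mathcal{T})$ defined recursively: its root is an arbitrary vertex $r$, and the children of $r$ are the roots of search trees built on the connected components of $\mathcal{T}-r$; a single-vertex tree has only itself as search tree. For a rooted tree $T$ and vertex $v$, $\mathtt{Path}_T(v)$ is the set of vertices on the path in $T$ from the root to $v$, including both endpoints. *)

theory Defs
  imports Main
begin

definition is_graph :: "'a set \<Rightarrow> ('a \<Rightarrow> 'a \<Rightarrow> bool) \<Rightarrow> bool" where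
  "is_graph V E \<longleftrightarrow> (\<forall>x y. E x y \<longrightarrow> x \<in> V \<and> y \<in> V \<and> x \<noteq> y \<and> E y x)"

definition reach :: "'a set \<Rightarrow> ('a \<Rightarrow> 'a \<Rightarrow> bool) \<Rightarrow> 'a \<Rightarrow> 'a \<Rightarrow> bool" where
  "reach S E = (\<lambda>x y. x \<in> S \<and> y \<in> S \<and> E x y)\<^sup>*\<^sup>*"

definition connected_graph :: "'a set \<Rightarrow> ('a \<Rightarrow> 'a \<Rightarrow> bool) \<Rightarrow> bool" where
  "connected_graph S E \<longleftrightarrow> (\<forall>x\<in>S. \<forall>y\<in>S. reach S E x y)"

definition is_cycle :: "'a set \<Rightarrow> ('a \<Rightarrow> 'a \<Rightarrow> bool) \<Rightarrow> 'a list \<Rightarrow> bool" where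
  "is_cycle V E cs \<longleftrightarrow> length cs \<ge> 3 \<and> distinct cs \<and> set cs \<subseteq> V \<and>
     (\<forall>i < length cs - 1. E (cs ! i) (cs ! Suc i)) \<and> E (last cs) (hd cs)"

definition is_tree :: "'a set \<Rightarrow> ('a \<Rightarrow> 'a \<Rightarrow> bool) \<Rightarrow> bool" where
  "is_tree V E \<longleftrightarrow> finite V \<and> V \<noteq> {} \<and> is_graph V E \<and> connected_graph V E \<and>
     \<not> (\<exists>cs. is_cycle V E cs)"

definition is_subgraph :: "'a set \<Rightarrow> ('a \<Rightarrow> 'a \<Rightarrow> bool) \<Rightarrow> 'a set \<Rightarrow> ('a \<Rightarrow> 'a \<Rightarrow> bool) \<Rightarrow> bool" where
  "is_subgraph W F V E \<longleftrightarrow> W \<subseteq> V \<and> is_graph W F \<and> (\<forall>x y. F x y \<longrightarrow> E x y)"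

definition components :: "'a set \<Rightarrow> ('a \<Rightarrow> 'a \<Rightarrow> bool) \<Rightarrow> 'a set set" where
  "components S E = {{y. reach S E x y} | x. x \<in> S}"

text \<open>Rooted trees are represented by a parent map: par v = None for the root and
for all vertices outside the vertex set, par v = Some u if u is the parent of v.
search_tree V E par: par is a search tree on the graph (V,E): a root r in V,
and the children of r are the roots of search trees on the components of
(V,E) - r.\<close>
inductive search_tree :: "'a set \<Rightarrow> ('a \<Rightarrow> 'a \<Rightarrow> bool) \<Rightarrow> ('a \<Rightarrow> 'a option) \<Rightarrow> bool" where
  step: "\<lbrakk> r \<in> V;
          \<forall>v. v \<notin> V \<longrightarrow> par v = None;
          par r = None;
          \<forall>C \<in> components (V - {r}) E.
             \<exists>p. search_tree C E p \<and>
                 (\<forall>v \<in> C. par v = (case p v of None \<Rightarrow> Some r | Some u \<Rightarrow> Some u)) \<rbrakk>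
         \<Longrightarrow> search_tree V E par"

definition Path :: "('a \<Rightarrow> 'a option) \<Rightarrow> 'a \<Rightarrow> 'a set" where
  "Path par v = {u. (\<lambda>x y. par x = Some y)\<^sup>*\<^sup>* v u}"

end

theory Submission
  imports Defs "HOL-Library.Transitive_Closure_Table"
begin

text \<open>Existence is proved by induction on the search tree T with root r. If r is not a
vertex of H, then H lies in a single component C of the tree minus r, and the restriction of
the subtree of T on C is the wanted search tree. If r is a vertex of H, the restrictions to
the components of H - r are hung below r. This works because the host graph is a tree: two
vertices of H - r joined by a path avoiding r are already joined inside H - r, so the
ancestors in H of a vertex v of H - r, apart from r, lie in the component of v in H - r.
Uniqueness holds because a search tree is determined by its root paths.\<close>

definition component :: "'a set \<Rightarrow> ('a \<Rightarrow> 'a \<Rightarrow> bool) \<Rightarrow> 'a \<Rightarrow> 'a set" where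
  "component S E x = {y. reach S E x y}"

definition cycle_free :: "'a set \<Rightarrow> ('a \<Rightarrow> 'a \<Rightarrow> bool) \<Rightarrow> bool" where
  "cycle_free V E \<longleftrightarrow> (\<nexists>cs. is_cycle V E cs)"

lemma reach_in_set: "reach S E x y \<Longrightarrow> x \<in> S \<Longrightarrow> y \<in> S"
  unfolding reach_def by (induction rule: rtranclp_induct) auto

lemma reach_refl [simp]: "reach S E x x"
  unfolding reach_def by simp

lemma reach_edge: "x \<in> S \<Longrightarrow> y \<in> S \<Longrightarrow> E x y \<Longrightarrow> reach S E x y"
  unfolding reach_def by auto

lemma reach_trans: "reach S E x y \<Longrightarrow> reach S E y z \<Longrightarrow> reach S E x z"
  unfolding reach_def by simp

lemma reach_sym: "symp E \<Longrightarrow> reach S E x y \<Longrightarrow> reach S E y x"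
  unfolding reach_def by (rule symp_rtranclp[THEN sympD]) (auto intro: sympI dest: sympD)

lemma reach_mono: "S \<subseteq> S' \<Longrightarrow> F \<le> E \<Longrightarrow> reach S F x y \<Longrightarrow> reach S' E x y"
  unfolding reach_def by (erule rtranclp_mono[THEN predicate2D, rotated]) auto

lemma mem_component [simp]: "x \<in> component S E x"
  unfolding component_def by simp

lemma component_subset: "x \<in> S \<Longrightarrow> component S E x \<subseteq> S"
  unfolding component_def using reach_in_set by fast

lemma components_eq: "components S E = component S E ` S"
  unfolding components_def component_def by blast

lemma component_in_components: "x \<in> S \<Longrightarrow> component S E x \<in> components S E"
  by (simp add: components_eq)

lemma components_subset: "D \<in> components S E \<Longrightarrow> D \<subseteq> S"
  by (auto simp: components_eq dest: component_subset)

lemma component_eq: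
  assumes "symp E" "y \<in> component S E x"
  shows "component S E y = component S E x"
proof -
  have xy: "reach S E x y" using assms(2) unfolding component_def by simp
  have yx: "reach S E y x" using reach_sym[OF assms(1) xy] .
  show ?thesis unfolding component_def using reach_trans[OF xy] reach_trans[OF yx] by blast
qed

lemma reach_within_component:
  assumes "reach S E x y" "x \<in> component S E x0"
  shows "reach (component S E x0) E x y"
  using assms(1) unfolding reach_def
proof (induction rule: rtranclp_induct)
  case (step y z)
  have "reach S E x0 y"
    using assms(2) step(1) reach_trans unfolding component_def reach_def by force
  moreover have "reach S E y z" using step(2) by (simp add: reach_edge)
  ultimately have "y \<in> component S E x0" "z \<in> component S E x0"
    unfolding component_def using reach_trans by auto
  with step show ?case by (simp add: rtranclp.rtrancl_into_rtrancl)
qed simp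

lemma connected_component:
  assumes "symp E"
  shows "connected_graph (component S E x) E"
  unfolding connected_graph_def
proof (intro ballI)
  fix y z assume "y \<in> component S E x" "z \<in> component S E x"
  then have "reach S E x y" "reach S E x z" unfolding component_def by simp_all
  then have "reach S E y z" using reach_trans reach_sym[OF assms] by metis
  then show "reach (component S E x) E y z"
    using \<open>y \<in> component S E x\<close> by (rule reach_within_component)
qed

lemma connected_subset_component:
  assumes "connected_graph W F" "W \<subseteq> S" "F \<le> E" "x \<in> W"
  shows "W \<subseteq> component S E x"
proof
  fix w assume "w \<in> W"
  then have "reach W F x w" using assms(1,4) unfolding connected_graph_def by blast
  then show "w \<in> component S E x"
    using reach_mono[OF assms(2,3)] unfolding component_def by blast
qed

lemma reach_neighbour_avoiding:
  assumes "connected_graph W F" "r \<in> W" "x \<in> W - {r}"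
  shows "\<exists>d. reach (W - {r}) F x d \<and> F d r"
proof -
  have "(\<lambda>x y. x \<in> W \<and> y \<in> W \<and> F x y)\<^sup>*\<^sup>* x r"
    using assms unfolding connected_graph_def reach_def by blast
  then show ?thesis
    using \<open>x \<in> W - {r}\<close>
  proof (induction rule: converse_rtranclp_induct)
    case (step x y)
    show ?case
    proof (cases "y = r")
      case False
      with step obtain d where "reach (W - {r}) F y d" "F d r" by blast
      moreover have "reach (W - {r}) F x y" using step False by (intro reach_edge) auto
      ultimately show ?thesis by (blast intro: reach_trans)
    next
      case True
      with step show ?thesis by (intro exI[of _ x]) simp
    qed
  qed simp
qed

lemma cycle_free_subset: "C \<subseteq> V \<Longrightarrow> cycle_free V E \<Longrightarrow> cycle_free C E"
  unfolding cycle_free_def is_cycle_def by blast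

text \<open>A path between two neighbours of r avoiding r closes a cycle through r.\<close>
lemma cycle_free_neighbours_not_reach:
  assumes "symp E" "cycle_free V E" "r \<in> V" "E r a" "E r b" "a \<noteq> b" "a \<in> V - {r}"
  shows "\<not> reach (V - {r}) E a b"
proof
  let ?R = "\<lambda>x y. x \<in> V - {r} \<and> y \<in> V - {r} \<and> E x y"
  assume "reach (V - {r}) E a b"
  then obtain xs where xs: "rtrancl_path ?R a xs b" "distinct (a # xs)"
    unfolding reach_def rtranclp_eq_rtrancl_path by (blast elim: rtrancl_path_distinct)
  have "xs \<noteq> []" using xs(1) \<open>a \<noteq> b\<close> by (auto elim: rtrancl_path.cases)
  have xs_in: "set xs \<subseteq> V - {r}" using rtrancl_path_Range[OF xs(1)] by blast
  have "is_cycle V E (r # a # xs)"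
    unfolding is_cycle_def
  proof (intro conjI allI impI)
    show "3 \<le> length (r # a # xs)" using \<open>xs \<noteq> []\<close> by (cases xs) auto
    show "distinct (r # a # xs)" using xs(2) xs_in \<open>a \<in> V - {r}\<close> by auto
    show "set (r # a # xs) \<subseteq> V" using xs_in assms(3,7) by auto
    show "E (last (r # a # xs)) (hd (r # a # xs))"
      using rtrancl_path_last[OF xs(1) \<open>xs \<noteq> []\<close>] \<open>xs \<noteq> []\<close> sympD[OF assms(1,5)] by simp
  next
    fix i assume "i < length (r # a # xs) - 1"
    then show "E ((r # a # xs) ! i) ((r # a # xs) ! Suc i)"
      using rtrancl_path_nth[OF xs(1)] assms(4) by (cases i) auto
  qed
  with assms(2) show False unfolding cycle_free_def by blast
qed

text \<open>Otherwise x and y would leave W - {r} towards r through two distinct neighbours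
  of r, which are joined by a path avoiding r.\<close>
lemma reach_remove_vertex_subgraph:
  assumes "symp E" "cycle_free V E" "W \<subseteq> V" "F \<le> E" "symp F" "connected_graph W F"
    and "r \<in> W" "x \<in> W - {r}" "y \<in> W - {r}" "reach (V - {r}) E x y"
  shows "reach (W - {r}) F x y"
proof (rule ccontr)
  assume not_reach: "\<not> reach (W - {r}) F x y"
  obtain a where a: "reach (W - {r}) F x a" "F a r"
    using reach_neighbour_avoiding[OF assms(6-8)] by blast
  obtain b where b: "reach (W - {r}) F y b" "F b r"
    using reach_neighbour_avoiding[OF assms(6,7,9)] by blast
  have "a \<noteq> b"
  proof
    assume "a = b"
    then have "reach (W - {r}) F a y" using reach_sym[OF assms(5) b(1)] by simp
    with not_reach show False using reach_trans[OF a(1)] by blast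
  qed
  have sub: "W - {r} \<subseteq> V - {r}" using assms(3) by blast
  have "reach (V - {r}) E a x" using reach_mono[OF sub assms(4) reach_sym[OF assms(5) a(1)]] .
  moreover have "reach (V - {r}) E y b" using reach_mono[OF sub assms(4) b(1)] .
  ultimately have "reach (V - {r}) E a b" using reach_trans assms(10) by metis
  moreover have "E r a" "E r b"
    using a(2) b(2) by (auto intro: sympD[OF assms(1)] predicate2D[OF assms(4)])
  moreover have "a \<in> V - {r}" using reach_in_set[OF a(1)] assms(3,8) by blast
  moreover have "r \<in> V" using assms(3,7) by blast
  ultimately show False
    using cycle_free_neighbours_not_reach[OF assms(1,2) \<open>r \<in> V\<close> _ _ \<open>a \<noteq> b\<close>] by blast
qed

abbreviation parent :: "('a \<Rightarrow> 'a option) \<Rightarrow> 'a \<Rightarrow> 'a \<Rightarrow> bool" where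
  "parent par x y \<equiv> par x = Some y"

abbreviation attach :: "'a \<Rightarrow> ('a \<Rightarrow> 'a option) \<Rightarrow> 'a \<Rightarrow> 'a option" where
  "attach r p v \<equiv> (case p v of None \<Rightarrow> Some r | Some u \<Rightarrow> Some u)"

lemma search_tree_parent_in:
  "search_tree V E par \<Longrightarrow> par v = Some u \<Longrightarrow> u \<in> V \<and> v \<in> V"
proof (induction arbitrary: v u rule: search_tree.induct)
  case (step r V par E)
  then have v: "v \<in> V - {r}" by force
  let ?C = "component (V - {r}) E v"
  have "?C \<in> components (V - {r}) E" using v by (rule component_in_components)
  then obtain p where p: "\<And>v u. p v = Some u \<Longrightarrow> u \<in> ?C \<and> v \<in> ?C"
    and attach: "\<forall>x\<in>?C. par x = attach r p x"
    using step(4) by blast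
  have "?C \<subseteq> V" using component_subset[OF v] by blast
  then show ?case
    using step(1,5) v p attach mem_component by (cases "p v") fastforce+
qed

lemma Path_subset:
  assumes "search_tree V E par" "v \<in> V"
  shows "Path par v \<subseteq> V"
proof
  fix u assume "u \<in> Path par v"
  then have "(parent par)\<^sup>*\<^sup>* v u" by (simp add: Path_def)
  then show "u \<in> V"
    by (induction rule: rtranclp_induct) (use assms search_tree_parent_in[OF assms(1)] in auto)
qed

lemma Path_root: "par v = None \<Longrightarrow> Path par v = {v}"
  unfolding Path_def by (auto elim: converse_rtranclpE)

lemma attach_ancestor:
  assumes "search_tree C E p" "\<forall>x\<in>C. par x = attach r p x" "v \<in> C" "(parent p)\<^sup>*\<^sup>* v u"
  shows "(parent par)\<^sup>*\<^sup>* v u"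
  using assms(4)
proof (induction rule: rtranclp_induct)
  case (step y z)
  then have "y \<in> C" using search_tree_parent_in[OF assms(1)] by blast
  with step assms(2) show ?case by (simp add: rtranclp.rtrancl_into_rtrancl)
qed simp

lemma search_tree_root:
  "search_tree V E par \<Longrightarrow>
     \<exists>r\<in>V. par r = None \<and> (\<forall>v\<in>V. r \<in> Path par v) \<and> (\<forall>v\<in>V. par v = None \<longrightarrow> v = r)"
proof (induction rule: search_tree.induct)
  case (step r V par E)
  have "r \<in> Path par v \<and> par v \<noteq> None" if v: "v \<in> V - {r}" for v
  proof -
    let ?C = "component (V - {r}) E v"
    have "?C \<in> components (V - {r}) E" using v by (rule component_in_components)
    from bspec[OF step(4) this] obtain p where p: "search_tree ?C E p" "\<forall>x\<in>?C. par x = attach r p x"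
      and root: "\<exists>r'\<in>?C. p r' = None \<and> (\<forall>w\<in>?C. r' \<in> Path p w) \<and>
        (\<forall>w\<in>?C. p w = None \<longrightarrow> w = r')"
      by blast
    from root obtain r' where r': "r' \<in> ?C" "p r' = None" "\<forall>w\<in>?C. r' \<in> Path p w"
      by blast
    have "(parent par)\<^sup>*\<^sup>* v r'"
      using attach_ancestor[OF p mem_component] bspec[OF r'(3) mem_component]
      unfolding Path_def by simp
    moreover have "par r' = Some r" using p(2) r'(1,2) by simp
    ultimately have "r \<in> Path par v" unfolding Path_def by (simp add: rtranclp.rtrancl_into_rtrancl)
    moreover have "par v \<noteq> None" using p(2) by (cases "p v") auto
    ultimately show ?thesis by blast
  qed
  moreover have "r \<in> Path par r" by (simp add: Path_def)
  ultimately show ?case using step(1,3) by blast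
qed

lemma search_tree_root_iff:
  assumes "search_tree V E par" "v \<in> V"
  shows "par v = None \<longleftrightarrow> Path par v = {v}"
proof
  assume "Path par v = {v}"
  moreover obtain r where "par r = None" "r \<in> Path par v"
    using search_tree_root[OF assms(1)] assms(2) by blast
  ultimately show "par v = None" by simp
qed (rule Path_root)

lemma Path_attach:
  assumes p: "search_tree C E p" "\<forall>x\<in>C. par x = attach r p x"
    and v: "v \<in> C" and "par r = None" "r \<notin> C"
  shows "Path par v = insert r (Path p v)"
proof (intro equalityI subsetI)
  fix u assume "u \<in> Path par v"
  then have "(parent par)\<^sup>*\<^sup>* v u" unfolding Path_def by simp
  then show "u \<in> insert r (Path p v)"
  proof (induction rule: rtranclp_induct)
    case (step y z)
    show ?case
    proof (cases "y = r")
      case False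
      then have "y \<in> Path p v" using step(3) by simp
      moreover have "y \<in> C" using Path_subset[OF p(1) v] calculation by blast
      ultimately show ?thesis
        using step(2) p(2) unfolding Path_def by (cases "p y") (auto intro: rtranclp.rtrancl_into_rtrancl)
    qed (use step \<open>par r = None\<close> in simp)
  qed (simp add: Path_def)
next
  obtain r' where r': "r' \<in> C" "p r' = None" "r' \<in> Path p v"
    using search_tree_root[OF p(1)] v by blast
  then have "(parent par)\<^sup>*\<^sup>* v r'" "par r' = Some r"
    using attach_ancestor[OF p v] p(2) unfolding Path_def by auto
  then have "(parent par)\<^sup>*\<^sup>* v r" by (simp add: rtranclp.rtrancl_into_rtrancl)
  fix u assume "u \<in> insert r (Path p v)"
  with \<open>(parent par)\<^sup>*\<^sup>* v r\<close> show "u \<in> Path par v"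
    using attach_ancestor[OF p v] unfolding Path_def by auto
qed

lemma Path_below_root:
  assumes "\<forall>C\<in>components (V - {r}) E. \<exists>p. search_tree C E p \<and> (\<forall>v\<in>C. par v = attach r p v)"
    and "par r = None" "v \<in> V - {r}"
  shows "r \<in> Path par v \<and> Path par v - {r} \<subseteq> component (V - {r}) E v"
proof -
  let ?C = "component (V - {r}) E v"
  have "?C \<in> components (V - {r}) E" using assms(3) by (rule component_in_components)
  with assms(1) obtain p where p: "search_tree ?C E p" "\<forall>x\<in>?C. par x = attach r p x"
    by blast
  have "r \<notin> ?C" using component_subset[OF assms(3)] by blast
  then show ?thesis
    using Path_attach[OF p mem_component assms(2)] Path_subset[OF p(1) mem_component] by blast
qed

lemma search_tree_subtree:
  assumes "search_tree V E par" "r \<in> V" "par r = None" "C \<in> components (V - {r}) E"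
  shows "\<exists>p. search_tree C E p \<and> (\<forall>v\<in>C. par v = attach r p v)"
  using assms(1)
proof cases
  case (step r0)
  have "r0 = r"
    using search_tree_root[OF assms(1)] step(1,3) assms(2,3) by metis
  with step(4) assms(4) show ?thesis by blast
qed

lemma search_tree_join:
  assumes "r \<in> W" "symp F" "\<forall>D\<in>components (W - {r}) F. search_tree D F (Q D)"
  shows "\<exists>q. search_tree W F q \<and> q r = None \<and>
           (\<forall>D\<in>components (W - {r}) F. \<forall>v\<in>D. Path q v = insert r (Path (Q D) v))"
proof -
  define q where
    "q v = (if v \<in> W - {r} then attach r (Q (component (W - {r}) F v)) v else None)" for v
  have agree: "\<forall>v\<in>D. q v = attach r (Q D) v" if D: "D \<in> components (W - {r}) F" for D
  proof
    fix v assume "v \<in> D"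
    obtain x where x: "x \<in> W - {r}" "D = component (W - {r}) F x"
      using D by (auto simp: components_eq)
    then have "component (W - {r}) F v = D"
      using component_eq[OF assms(2)] \<open>v \<in> D\<close> by blast
    moreover have "v \<in> W - {r}" using component_subset[OF x(1)] x(2) \<open>v \<in> D\<close> by blast
    ultimately show "q v = attach r (Q D) v" by (simp add: q_def)
  qed
  have "q r = None" by (simp add: q_def)
  have "search_tree W F q"
  proof (rule search_tree.step[of r])
    show "\<forall>C\<in>components (W - {r}) F. \<exists>p. search_tree C F p \<and> (\<forall>v\<in>C. q v = attach r p v)"
      using assms(3) agree by blast
  qed (use assms(1) \<open>q r = None\<close> in \<open>simp_all add: q_def\<close>)
  moreover have "Path q v = insert r (Path (Q D) v)" if "D \<in> components (W - {r}) F" "v \<in> D" for D v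
  proof (rule Path_attach)
    show "search_tree D F (Q D)" using assms(3) that(1) by blast
    show "r \<notin> D" using components_subset[OF that(1)] by blast
  qed (use agree that \<open>q r = None\<close> in auto)
  ultimately show ?thesis using \<open>q r = None\<close> by blast
qed

lemma search_tree_eqI:
  assumes "search_tree V E q1" "search_tree V E q2" "\<forall>v\<in>V. Path q1 v = Path q2 v"
  shows "q1 = q2"
  using assms
proof (induction arbitrary: q2 rule: search_tree.induct)
  case (step r V q1 E q2)
  have "q2 r = None"
    using search_tree_root_iff[OF step.prems(1) step(1)] step.prems(2) step(1)
      Path_root[of q1, OF step(3)] by simp
  show ?case
  proof
    fix v
    show "q1 v = q2 v"
    proof (cases "v \<in> V - {r}")
      case False
      then show ?thesis
        using step(2,3) \<open>q2 r = None\<close> search_tree_parent_in[OF step.prems(1)]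
        by (cases "q2 v") auto
    next
      case True
      let ?C = "component (V - {r}) E v"
      have C: "?C \<in> components (V - {r}) E" using True by (rule component_in_components)
      have "r \<notin> ?C" using component_subset[OF True] by blast
      from bspec[OF step(4) C] obtain p1 where p1: "search_tree ?C E p1"
        "\<forall>v\<in>?C. q1 v = attach r p1 v"
        and IH: "\<forall>p2. search_tree ?C E p2 \<longrightarrow> (\<forall>v\<in>?C. Path p1 v = Path p2 v) \<longrightarrow> p1 = p2"
        by blast
      obtain p2 where p2: "search_tree ?C E p2" "\<forall>v\<in>?C. q2 v = attach r p2 v"
        using search_tree_subtree[OF step.prems(1) step(1) \<open>q2 r = None\<close> C] by blast
      have "Path p1 u = Path p2 u" if "u \<in> ?C" for u
      proof -
        have "u \<in> V" using that component_subset[OF True] by blast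
        have "insert r (Path p1 u) = Path q1 u"
          using Path_attach[OF p1 that step(3) \<open>r \<notin> ?C\<close>] by simp
        also have "\<dots> = Path q2 u" using step.prems(2) \<open>u \<in> V\<close> by blast
        also have "\<dots> = insert r (Path p2 u)"
          using Path_attach[OF p2 that \<open>q2 r = None\<close> \<open>r \<notin> ?C\<close>] .
        finally have "insert r (Path p1 u) = insert r (Path p2 u)" .
        moreover have "r \<notin> Path p1 u" "r \<notin> Path p2 u"
          using Path_subset[OF p1(1) that] Path_subset[OF p2(1) that] \<open>r \<notin> ?C\<close> by auto
        ultimately show ?thesis by (metis insert_ident)
      qed
      with IH p2(1) have "p1 = p2" by blast
      then show ?thesis using p1(2) p2(2) by simp
    qed
  qed
qed

definition is_restriction ::
    "('a \<Rightarrow> 'a option) \<Rightarrow> 'a set \<Rightarrow> ('a \<Rightarrow> 'a \<Rightarrow> bool) \<Rightarrow> ('a \<Rightarrow> 'a option) \<Rightarrow> bool" where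
  "is_restriction par W F q \<longleftrightarrow> search_tree W F q \<and> (\<forall>v\<in>W. Path q v = Path par v \<inter> W)"

definition restrictable :: "'a set \<Rightarrow> ('a \<Rightarrow> 'a \<Rightarrow> bool) \<Rightarrow> ('a \<Rightarrow> 'a option) \<Rightarrow> bool" where
  "restrictable V E par \<longleftrightarrow> (\<forall>W F. W \<subseteq> V \<longrightarrow> F \<le> E \<longrightarrow> symp F \<longrightarrow> W \<noteq> {} \<longrightarrow>
     connected_graph W F \<longrightarrow> (\<exists>q. is_restriction par W F q))"

lemma restriction_avoiding_root:
  assumes subtrees: "\<forall>C\<in>components (V - {r}) E.
      \<exists>p. search_tree C E p \<and> restrictable C E p \<and> (\<forall>v\<in>C. par v = attach r p v)"
    and "par r = None" "W \<subseteq> V - {r}" "F \<le> E" "symp F" "W \<noteq> {}" "connected_graph W F"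
  shows "\<exists>q. is_restriction par W F q"
proof -
  obtain w where "w \<in> W" using assms(6) by blast
  let ?C = "component (V - {r}) E w"
  have "w \<in> V - {r}" using \<open>w \<in> W\<close> assms(3) by blast
  then have "?C \<in> components (V - {r}) E" by (rule component_in_components)
  with subtrees obtain p where p: "search_tree ?C E p" "\<forall>x\<in>?C. par x = attach r p x"
    and "restrictable ?C E p"
    by blast
  have W: "W \<subseteq> ?C" using connected_subset_component[OF assms(7,3,4) \<open>w \<in> W\<close>] .
  with \<open>restrictable ?C E p\<close> obtain q where q: "is_restriction p W F q"
    using assms(4-7) unfolding restrictable_def by blast
  have "r \<notin> ?C" using component_subset[OF \<open>w \<in> V - {r}\<close>] by blast
  have "Path par v \<inter> W = Path p v \<inter> W" if "v \<in> W" for v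
    using Path_attach[OF p _ assms(2) \<open>r \<notin> ?C\<close>] W that assms(3) by auto
  with q show ?thesis unfolding is_restriction_def by auto
qed

lemma Path_inter_component_remove_root:
  assumes "\<forall>C\<in>components (V - {r}) E. \<exists>p. search_tree C E p \<and> (\<forall>v\<in>C. par v = attach r p v)"
    and "par r = None" "symp E" "cycle_free V E" "W \<subseteq> V" "F \<le> E" "symp F"
    and "connected_graph W F" "r \<in> W" "v \<in> W - {r}"
  shows "Path par v \<inter> component (W - {r}) F v = Path par v \<inter> W - {r}"
proof -
  have below: "Path par v - {r} \<subseteq> component (V - {r}) E v"
    using Path_below_root[OF assms(1,2)] assms(5,10) by blast
  have "Path par v \<inter> W - {r} \<subseteq> component (W - {r}) F v"
  proof
    fix u assume u: "u \<in> Path par v \<inter> W - {r}"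
    then have "reach (V - {r}) E v u" using below unfolding component_def by blast
    then show "u \<in> component (W - {r}) F v"
      using reach_remove_vertex_subgraph[OF assms(3-10)] u unfolding component_def by blast
  qed
  moreover have "component (W - {r}) F v \<subseteq> W - {r}" using component_subset[OF assms(10)] .
  ultimately show ?thesis by blast
qed

lemma restriction_through_root:
  assumes subtrees: "\<forall>C\<in>components (V - {r}) E.
      \<exists>p. search_tree C E p \<and> restrictable C E p \<and> (\<forall>v\<in>C. par v = attach r p v)"
    and "par r = None" "symp E" "cycle_free V E" "W \<subseteq> V" "F \<le> E" "symp F"
    and "connected_graph W F" "r \<in> W"
  shows "\<exists>q. is_restriction par W F q"
proof -
  have "\<forall>D\<in>components (W - {r}) F. \<exists>q. is_restriction par D F q"
  proof
    fix D assume D: "D \<in> components (W - {r}) F"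
    then obtain x where "x \<in> D" "D = component (W - {r}) F x"
      by (auto simp: components_eq)
    then have "D \<noteq> {}" "connected_graph D F"
      using connected_component[OF assms(7)] by blast+
    moreover have "D \<subseteq> V - {r}" using components_subset[OF D] assms(5) by blast
    ultimately show "\<exists>q. is_restriction par D F q"
      using restriction_avoiding_root[OF subtrees assms(2)] assms(6,7) by blast
  qed
  then obtain Q where Q: "\<forall>D\<in>components (W - {r}) F. is_restriction par D F (Q D)"
    by metis
  then obtain q where q: "search_tree W F q" "q r = None"
      "\<forall>D\<in>components (W - {r}) F. \<forall>v\<in>D. Path q v = insert r (Path (Q D) v)"
    using search_tree_join[OF assms(9,7), of Q] unfolding is_restriction_def by blast
  have hanging: "\<forall>C\<in>components (V - {r}) E. \<exists>p. search_tree C E p \<and> (\<forall>v\<in>C. par v = attach r p v)"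
    using subtrees by blast
  have "Path q v = Path par v \<inter> W" if v: "v \<in> W - {r}" for v
  proof -
    let ?D = "component (W - {r}) F v"
    have D: "?D \<in> components (W - {r}) F" using v by (rule component_in_components)
    have "r \<in> Path par v"
      using Path_below_root[OF hanging assms(2)] v assms(5) by blast
    moreover have "Path par v \<inter> ?D = Path par v \<inter> W - {r}"
      by (rule Path_inter_component_remove_root[OF hanging assms(2-9) v])
    ultimately show ?thesis
      using q(3) Q D assms(9) unfolding is_restriction_def by auto
  qed
  moreover have "Path q r = Path par r \<inter> W"
    using Path_root[of q, OF q(2)] Path_root[of par, OF assms(2)] assms(9) by simp
  ultimately show ?thesis using q(1) unfolding is_restriction_def by blast
qed

lemma search_tree_restrictable:
  "search_tree V E par \<Longrightarrow> symp E \<Longrightarrow> cycle_free V E \<Longrightarrow> restrictable V E par"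
proof (induction rule: search_tree.induct)
  case (step r V par E)
  have subtrees: "\<forall>C\<in>components (V - {r}) E.
      \<exists>p. search_tree C E p \<and> restrictable C E p \<and> (\<forall>v\<in>C. par v = attach r p v)"
  proof
    fix C assume C: "C \<in> components (V - {r}) E"
    have "cycle_free C E" using cycle_free_subset[OF _ step.prems(2)] components_subset[OF C] by blast
    with bspec[OF step(4) C] step.prems(1) show "\<exists>p. search_tree C E p \<and> restrictable C E p \<and>
        (\<forall>v\<in>C. par v = attach r p v)" by blast
  qed
  show ?case
    unfolding restrictable_def
  proof (intro allI impI)
    fix W F assume W: "W \<subseteq> V" "F \<le> E" "symp F" "W \<noteq> {}" "connected_graph W F"
    show "\<exists>q. is_restriction par W F q"
    proof (cases "r \<in> W")
      case True
      then show ?thesis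
        using restriction_through_root[OF subtrees step(3) step.prems W(1-3,5)] by blast
    next
      case False
      then show ?thesis
        using restriction_avoiding_root[OF subtrees step(3) _ W(2-5)] W(1) by blast
    qed
  qed
qed

lemma is_restriction_unique:
  "is_restriction par W F q1 \<Longrightarrow> is_restriction par W F q2 \<Longrightarrow> q1 = q2"
  unfolding is_restriction_def by (auto intro: search_tree_eqI)

theorem mainTheorem13:
  fixes V W :: "'a set" and E F :: "'a \<Rightarrow> 'a \<Rightarrow> bool" and par :: "'a \<Rightarrow> 'a option"
  assumes "is_tree V E"
    and "search_tree V E par"
    and "is_subgraph W F V E"
    and "W \<noteq> {}"
    and "connected_graph W F"
  shows "\<exists>!q. search_tree W F q \<and> (\<forall>v \<in> W. Path q v = Path par v \<inter> W)"
proof -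
  have "symp E" "cycle_free V E"
    using assms(1) unfolding is_tree_def is_graph_def cycle_free_def by (auto intro: sympI)
  moreover have "W \<subseteq> V" "F \<le> E" "symp F"
    using assms(3) unfolding is_subgraph_def is_graph_def by (auto intro: sympI)
  ultimately obtain q where "is_restriction par W F q"
    using search_tree_restrictable[OF assms(2)] assms(4,5) unfolding restrictable_def by blast
  then have "\<exists>!q. is_restriction par W F q" by (blast intro: is_restriction_unique)
  then show ?thesis unfolding is_restriction_def .
qed

end
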